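(* Let $\mathcal{I}=([n],M,\mathcal{V})$ be an instance with additive valuations, $\epsilon\ge0$, and $(N',M',\mathcal{V})=\mathtt{reduce}(\mathcal{I},\epsilon)$. Let $r_4$ be the number of times $R^{3/4+\epsilon}_4$ is applied during $\mathtt{reduce}(\mathcal{I},\epsilon)$ and $G_4$ the set of goods removed by these applications. Then for every agent $i\in N'$, $\mathrm{MMS}^{n-r_4}_{v_i}(M\setminus G_4)\ge1-4\epsilon$, where $v_i$ denotes the valuation obtained after steps (1)–(2) of $\mathtt{reduce}$ and $M$ the full set of goods.
   Context: $\mathrm{MMS}^d_v(S)$ is the maximum over partitions of $S$ into $d$ bundles of the minimum bundle value under $v$; $\mathrm{MMS}_i=\mathrm{MMS}^n_{v_i}(M)$. An instance is ordered if $M=[m]$ and $v_i(1)\ge\dots\ge v_i(m)$ for all agents $i$. $\mathtt{order}(([n],[m],\mathcal{V}))$ replaces $v_i$ by $v'_i$ where $v'_i(j)$ is the $j$-th largest number of the multiset $\{v_i(g):g\in[m]\}$. Rules for an ordered instance with $n$ current agents and threshold $\alpha$: $R^\alpha_1$ applicable if some agent $i$ has $v_i(1)\ge\alpha$; $R^\alpha_2$ if some $i$ has $v_i(\{2n-1,2n,2n+1\})\ge\alpha$; $R^\alpha_3$ if some $i$ has $v_i(\{3n-2,\dots,3n+1\})\ge\alpha$; $R^\alpha_4$ if some $i$ has $v_i(\{1,2n+1\})\ge\alpha$; applying it gives that set to such an agent and removes agent and goods, re-indexing the remaining goods in their order. $\mathtt{reduce}(\mathcal{I},\epsilon)$: (1)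 replace $\mathcal{I}$ by $\mathtt{order}(\mathcal{I})$; (2) set $v_i(g)\leftarrow v_i(g)/\mathrm{MMS}_i$ for all agents $i$ and goods $g$ (so every $\mathrm{MMS}_i$ becomes 1); (3) while some $R^{3/4+\epsilon}_k$, $k\in[4]$, is applicable, apply it for the smallest applicable $k$; output the remaining agents, goods and valuations. *)

theory Defs
  imports Complex_Main "HOL-Library.Multiset" "HOL-Library.FuncSet"
begin

text \<open>Partitions of S into d (possibly empty) bundles are encoded as assignments
  A \<in> S \<rightarrow>E {..<d}; bundle k is {g \<in> S. A g = k}.\<close>

definition MMS :: "nat \<Rightarrow> ('g \<Rightarrow> real) \<Rightarrow> 'g set \<Rightarrow> real" where
  "MMS d f S = Max ((\<lambda>A. Min ((\<lambda>k. \<Sum>g\<in>{g\<in>S. A g = k}. f g) ` {..<d})) ` (S \<rightarrow>\<^sub>E {..<d}))"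

text \<open>order: goods become 1..m and v'_i(j) is the j-th largest element of the multiset
  {v_i(g) : g in M}.\<close>
definition order_val :: "'g set \<Rightarrow> (nat \<Rightarrow> 'g \<Rightarrow> real) \<Rightarrow> nat \<Rightarrow> nat \<Rightarrow> real" where
  "order_val M v i j =
     (if 1 \<le> j \<and> j \<le> card M
      then rev (sorted_list_of_multiset (image_mset (v i) (mset_set M))) ! (j - 1)
      else 0)"

definition normalize_val :: "nat \<Rightarrow> nat \<Rightarrow> (nat \<Rightarrow> nat \<Rightarrow> real) \<Rightarrow> nat \<Rightarrow> nat \<Rightarrow> real" where
  "normalize_val n m w i g = w i g / MMS n (w i) {1..m}"

text \<open>Goods at the (1-based) positions P of the current ordered list of remaining goods L
  (positions beyond the list are ignored, i.e. treated as absent goods).\<close>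
definition goods_at :: "nat list \<Rightarrow> nat set \<Rightarrow> nat set" where
  "goods_at L P = {L ! (p - 1) | p. p \<in> P \<and> 1 \<le> p \<and> p \<le> length L}"

definition rule_pos :: "nat \<Rightarrow> nat \<Rightarrow> nat set" where
  "rule_pos k n =
     (if k = 1 then {1}
      else if k = 2 then {2*n - 1, 2*n, 2*n + 1}
      else if k = 3 then {3*n - 2 .. 3*n + 1}
      else {1, 2*n + 1})"

definition rule_applicable ::
  "(nat \<Rightarrow> nat \<Rightarrow> real) \<Rightarrow> real \<Rightarrow> nat set \<Rightarrow> nat list \<Rightarrow> nat \<Rightarrow> nat \<Rightarrow> bool" where
  "rule_applicable w \<alpha> N L k i \<longleftrightarrow>
     k \<in> {1..4} \<and> i \<in> N \<and> (\<Sum>g\<in>goods_at L (rule_pos k (card N)). w i g) \<ge> \<alpha>"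

text \<open>A run of the while-loop of reduce, starting with agents N and remaining goods L
  (ordered list), ending with agents N' and goods L'. The trace records for each
  application (k, agent, removed goods). Any agent for which the smallest applicable
  rule applies may be chosen.\<close>
inductive reduce_run ::
  "(nat \<Rightarrow> nat \<Rightarrow> real) \<Rightarrow> real \<Rightarrow> nat set \<Rightarrow> nat list \<Rightarrow> (nat \<times> nat \<times> nat set) list
   \<Rightarrow> nat set \<Rightarrow> nat list \<Rightarrow> bool" where
  stop: "\<not> (\<exists>k i. rule_applicable w \<alpha> N L k i) \<Longrightarrow> reduce_run w \<alpha> N L [] N L"
| step: "rule_applicable w \<alpha> N L k i \<Longrightarrow>
         (\<forall>k' i'. k' < k \<longrightarrow> \<not> rule_applicable w \<alpha> N L k' i') \<Longrightarrow>
         S = goods_at L (rule_pos k (card N)) \<Longrightarrow>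
         reduce_run w \<alpha> (N - {i}) (filter (\<lambda>g. g \<notin> S) L) tr N' L' \<Longrightarrow>
         reduce_run w \<alpha> N L ((k, i, S) # tr) N' L'"

end

theory Submission
  imports Defs
begin

(* After ordering and normalisation, i has a
   partition of the goods into n bundles each worth at least 1. Whenever R4 is applied, R1 and
   R2 are applicable to nobody, so of the two goods removed the first is worth at most
   \<alpha> = 3/4 + \<epsilon> to i and the (2n+1)-th at most \<alpha>/3, being the cheapest of three
   goods worth less than \<alpha> together. A bundle losing a goods of the first kind and b of the
   second keeps value at least (4 - 3a - b) (1 - 4\<epsilon>) / 4; call 4 - 3a - b its units.
   At most r4 goods of each kind are removed, so the bundles carry at least 4 (n - r4) units,
   and they can be merged into n - r4 groups of at least 4 units each, i.e. of value at least
   1 - 4\<epsilon>. *)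

section \<open>Maximin shares\<close>

lemma MMS_geI:
  assumes "finite S" "1 \<le> d" "A \<in> S \<rightarrow>\<^sub>E {..<d}"
    and "\<And>j. j < d \<Longrightarrow> t \<le> (\<Sum>g\<in>{g\<in>S. A g = j}. f g)"
  shows "t \<le> MMS d f S"
proof -
  let ?F = "\<lambda>A. Min ((\<lambda>k. \<Sum>g\<in>{g\<in>S. A g = k}. f g) ` {..<d})"
  have "t \<le> ?F A"
    using assms(2,4) by (subst Min_ge_iff) (auto simp: lessThan_empty_iff)
  also have "?F A \<le> Max (?F ` (S \<rightarrow>\<^sub>E {..<d}))"
    using assms(1,3) by (intro Max_ge) (auto intro: finite_PiE)
  finally show ?thesis unfolding MMS_def .
qed

lemma obtain_MMS_partition:
  assumes "finite S" "1 \<le> d"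
  obtains A where "A \<in> S \<rightarrow>\<^sub>E {..<d}"
      "\<And>j. j < d \<Longrightarrow> MMS d f S \<le> (\<Sum>g\<in>{g\<in>S. A g = j}. f g)"
proof -
  let ?F = "\<lambda>A. Min ((\<lambda>k. \<Sum>g\<in>{g\<in>S. A g = k}. f g) ` {..<d})"
  have "S \<rightarrow>\<^sub>E {..<d} \<noteq> {}"
    using assms(2) by (auto simp: PiE_eq_empty_iff lessThan_empty_iff)
  then have "MMS d f S \<in> ?F ` (S \<rightarrow>\<^sub>E {..<d})"
    unfolding MMS_def using assms(1) by (intro Max_in) (auto intro: finite_PiE)
  then obtain A where "A \<in> S \<rightarrow>\<^sub>E {..<d}" "MMS d f S = ?F A" by auto
  then show thesis
    by (intro that) auto
qed

lemma MMS_cong: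
  assumes "\<And>g. g \<in> S \<Longrightarrow> f g = f' g"
  shows "MMS d f S = MMS d f' S"
proof -
  have sums: "(\<Sum>g\<in>{g\<in>S. A g = k}. f g) = (\<Sum>g\<in>{g\<in>S. A g = k}. f' g)" for A k
    using assms by (intro sum.cong) auto
  then show ?thesis
    unfolding MMS_def by (simp only: sums)
qed

lemma MMS_reindex_ge:
  assumes "bij_betw \<sigma> T S" "finite S" "1 \<le> d"
  shows "MMS d f S \<le> MMS d (f \<circ> \<sigma>) T"
proof -
  obtain A where A: "A \<in> S \<rightarrow>\<^sub>E {..<d}"
      "\<And>j. j < d \<Longrightarrow> MMS d f S \<le> (\<Sum>g\<in>{g\<in>S. A g = j}. f g)"
    using obtain_MMS_partition[OF assms(2,3), where f = f] by blast
  have "finite T"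
    using assms(1,2) by (simp add: bij_betw_finite)
  moreover have "restrict (A \<circ> \<sigma>) T \<in> T \<rightarrow>\<^sub>E {..<d}"
    using A(1) bij_betw_apply[OF assms(1)] by auto
  moreover have "MMS d f S \<le> (\<Sum>x\<in>{x\<in>T. restrict (A \<circ> \<sigma>) T x = j}. (f \<circ> \<sigma>) x)" if "j < d" for j
  proof -
    let ?T = "{x\<in>T. restrict (A \<circ> \<sigma>) T x = j}"
    have "inj_on \<sigma> ?T"
      using bij_betw_imp_inj_on[OF assms(1)] by (rule inj_on_subset) auto
    then have "(\<Sum>x\<in>?T. (f \<circ> \<sigma>) x) = (\<Sum>g\<in>\<sigma> ` ?T. f g)"
      by (simp add: sum.reindex)
    also have "\<sigma> ` ?T = {g\<in>S. A g = j}"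
      using bij_betw_imp_surj_on[OF assms(1)] by auto
    finally have "(\<Sum>x\<in>?T. (f \<circ> \<sigma>) x) = (\<Sum>g\<in>{g\<in>S. A g = j}. f g)" .
    with A(2)[OF that] show ?thesis
      by linarith
  qed
  ultimately show ?thesis
    using MMS_geI[OF _ assms(3)] by blast
qed

lemma MMS_reindex:
  assumes "bij_betw \<sigma> T S" "finite S" "1 \<le> d"
  shows "MMS d (f \<circ> \<sigma>) T = MMS d f S"
proof (rule antisym)
  have "MMS d (f \<circ> \<sigma>) T \<le> MMS d (f \<circ> \<sigma> \<circ> inv_into T \<sigma>) S"
    using assms by (intro MMS_reindex_ge bij_betw_inv_into) (auto dest: bij_betw_finite)
  also have "\<dots> = MMS d f S"
    using assms(1) by (intro MMS_cong) (simp add: bij_betw_inv_into_right)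
  finally show "MMS d (f \<circ> \<sigma>) T \<le> MMS d f S" .
qed (rule MMS_reindex_ge[OF assms])

lemma MMS_scale_ge:
  assumes "finite S" "1 \<le> d" "0 \<le> c"
  shows "c * MMS d f S \<le> MMS d (\<lambda>g. c * f g) S"
proof -
  obtain A where A: "A \<in> S \<rightarrow>\<^sub>E {..<d}"
      "\<And>j. j < d \<Longrightarrow> MMS d f S \<le> (\<Sum>g\<in>{g\<in>S. A g = j}. f g)"
    using obtain_MMS_partition[OF assms(1,2), where f = f] by blast
  show ?thesis
    using A assms by (intro MMS_geI[OF assms(1,2) A(1)]) (simp add: sum_distrib_left[symmetric] mult_left_mono)
qed

lemma MMS_scale:
  assumes "finite S" "1 \<le> d" "0 < c"
  shows "MMS d (\<lambda>g. c * f g) S = c * MMS d f S"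
proof (rule antisym)
  have "inverse c * MMS d (\<lambda>g. c * f g) S \<le> MMS d (\<lambda>g. inverse c * (c * f g)) S"
    using MMS_scale_ge[OF assms(1,2)] assms(3) by simp
  also have "\<dots> = MMS d f S"
    using assms(3) by (intro MMS_cong) simp
  finally have "inverse c * MMS d (\<lambda>g. c * f g) S \<le> MMS d f S" .
  then show "MMS d (\<lambda>g. c * f g) S \<le> c * MMS d f S"
    using assms(3) by (simp add: field_simps)
qed (use MMS_scale_ge[OF assms(1,2), of c f] assms(3) in simp)

lemma order_val_nonneg:
  assumes "\<forall>g\<in>M. 0 \<le> v i g"
  shows "0 \<le> order_val M v i j"
proof (cases "1 \<le> j \<and> j \<le> card M")
  case True
  let ?xs = "rev (sorted_list_of_multiset (image_mset (v i) (mset_set M)))"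
  have "length ?xs = card M"
    by (metis length_rev mset_sorted_list_of_multiset size_image_mset size_mset size_mset_set)
  then have "j - 1 < length ?xs"
    using True by linarith
  then have "?xs ! (j - 1) \<in> set ?xs"
    by (rule nth_mem)
  also have "set ?xs = v i ` M"
  proof -
    have "finite M"
      using True by (intro card_ge_0_finite) linarith
    then show ?thesis
      by simp
  qed
  finally show ?thesis
    using True assms unfolding order_val_def by auto
qed (auto simp: order_val_def)

lemma order_val_antimono:
  assumes "1 \<le> j" "j \<le> j'" "j' \<le> card M"
  shows "order_val M v i j' \<le> order_val M v i j"
proof -
  let ?xs = "rev (sorted_list_of_multiset (image_mset (v i) (mset_set M)))"
  have "length ?xs = card M"
    by (metis length_rev mset_sorted_list_of_multiset size_image_mset size_mset size_mset_set)
  moreover have "sorted (rev ?xs)"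
    by simp
  ultimately have "?xs ! (j' - 1) \<le> ?xs ! (j - 1)"
    using assms by (intro sorted_rev_nth_mono) auto
  then show ?thesis
    using assms unfolding order_val_def by simp
qed

lemma order_val_enumeration:
  assumes "finite M"
  obtains \<sigma> where "bij_betw \<sigma> {1..card M} M"
      "\<And>j. j \<in> {1..card M} \<Longrightarrow> order_val M v i j = v i (\<sigma> j)"
proof -
  obtain ls where ls: "set ls = M" "distinct ls"
    using finite_distinct_list[OF assms] by blast
  define es where "es = rev (sort_key (v i) ls)"
  have "length ls = card M"
    using ls distinct_card by metis
  then have es: "set es = M" "distinct es" "length es = card M"
    using ls by (simp_all add: es_def)
  have "image_mset (v i) (mset_set M) = mset (map (v i) ls)"
    using ls mset_set_set by (metis mset_map)
  then have "sorted_list_of_multiset (image_mset (v i) (mset_set M)) = sort (map (v i) ls)"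
    by (simp only: sorted_list_of_multiset_mset)
  also have "\<dots> = map (v i) (sort_key (v i) ls)"
    by (rule properties_for_sort) simp_all
  finally have sorted_values:
    "rev (sorted_list_of_multiset (image_mset (v i) (mset_set M))) = map (v i) es"
    unfolding es_def by (metis rev_map)
  have "bij_betw (\<lambda>j. j - 1) {1..card M} {..<card M}"
    by (rule bij_betw_byWitness[where f' = Suc]) auto
  moreover have "bij_betw ((!) es) {..<card M} M"
    using es by (intro bij_betw_nth) auto
  ultimately have "bij_betw ((!) es \<circ> (\<lambda>j. j - 1)) {1..card M} M"
    by (rule bij_betw_trans)
  then have "bij_betw (\<lambda>j. es ! (j - 1)) {1..card M} M"
    by (simp add: comp_def)
  moreover have "order_val M v i j = v i (es ! (j - 1))" if "j \<in> {1..card M}" for j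
  proof -
    have "j - 1 < length es"
      using that es(3) by auto
    then show ?thesis
      using that by (simp add: order_val_def sorted_values)
  qed
  ultimately show thesis
    by (rule that)
qed

lemma MMS_order_val:
  assumes "finite M" "1 \<le> n"
  shows "MMS n (order_val M v i) {1..card M} = MMS n (v i) M"
proof -
  obtain \<sigma> where \<sigma>: "bij_betw \<sigma> {1..card M} M"
      "\<And>j. j \<in> {1..card M} \<Longrightarrow> order_val M v i j = v i (\<sigma> j)"
    using order_val_enumeration[OF assms(1)] by blast
  have "MMS n (order_val M v i) {1..card M} = MMS n (v i \<circ> \<sigma>) {1..card M}"
    using \<sigma>(2) by (intro MMS_cong) simp
  also have "\<dots> = MMS n (v i) M"
    using \<sigma>(1) assms by (rule MMS_reindex)
  finally show ?thesis .
qed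

lemma normalize_order_val_eq:
  assumes "finite M" "1 \<le> n"
  shows "normalize_val n (card M) (order_val M v) i = (\<lambda>g. inverse (MMS n (v i) M) * order_val M v i g)"
  unfolding normalize_val_def MMS_order_val[OF assms] by (simp add: divide_inverse mult.commute)

lemma MMS_normalize_order_val:
  assumes "finite M" "1 \<le> n" "0 < MMS n (v i) M"
  shows "MMS n (normalize_val n (card M) (order_val M v) i) {1..card M} = 1"
proof -
  have "MMS n (normalize_val n (card M) (order_val M v) i) {1..card M}
      = inverse (MMS n (v i) M) * MMS n (order_val M v i) {1..card M}"
    unfolding normalize_order_val_eq[OF assms(1,2)] using assms(2,3) by (intro MMS_scale) auto
  then show ?thesis
    unfolding MMS_order_val[OF assms(1,2)] using assms(3) by simp
qed

lemma normalize_order_val_nonneg: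
  assumes "finite M" "1 \<le> n" "0 < MMS n (v i) M" "\<forall>g\<in>M. 0 \<le> v i g"
  shows "0 \<le> normalize_val n (card M) (order_val M v) i g"
  using order_val_nonneg[of M v i g, OF assms(4)] assms(3)
  by (simp add: normalize_order_val_eq[OF assms(1,2)])

lemma sorted_normalize_order_val:
  assumes "finite M" "1 \<le> n" "0 < MMS n (v i) M"
  shows "sorted_wrt (\<lambda>x y. normalize_val n (card M) (order_val M v) i y
      \<le> normalize_val n (card M) (order_val M v) i x) [1..<card M + 1]"
  using assms(3)
  by (intro sorted_wrt_mono_rel[OF _ sorted_wrt_upt])
    (auto simp: normalize_order_val_eq[OF assms(1,2)] intro!: mult_left_mono order_val_antimono)

section \<open>Grouping bundles by units\<close>

definition light_cover :: "('a \<Rightarrow> real) \<Rightarrow> real \<Rightarrow> nat \<Rightarrow> 'a set \<Rightarrow> bool" where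
  "light_cover f \<alpha> r R \<longleftrightarrow>
     (\<exists>G H. finite G \<and> finite H \<and> card G \<le> r \<and> card H \<le> r \<and>
        (\<forall>g\<in>G. f g \<le> \<alpha>) \<and> (\<forall>h\<in>H. 3 * f h \<le> \<alpha>) \<and> R \<subseteq> G \<union> H)"

lemma light_cover_empty: "light_cover f \<alpha> r {}"
  unfolding light_cover_def by (intro exI[of _ "{}"]) simp

lemma light_cover_Un:
  assumes "light_cover f \<alpha> r R" "light_cover f \<alpha> s S"
  shows "light_cover f \<alpha> (r + s) (R \<union> S)"
proof -
  obtain G H where "finite G" "finite H" "card G \<le> r" "card H \<le> r"
      "\<forall>g\<in>G. f g \<le> \<alpha>" "\<forall>h\<in>H. 3 * f h \<le> \<alpha>" "R \<subseteq> G \<union> H"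
    using assms(1) unfolding light_cover_def by blast
  moreover obtain G' H' where "finite G'" "finite H'" "card G' \<le> s" "card H' \<le> s"
      "\<forall>g\<in>G'. f g \<le> \<alpha>" "\<forall>h\<in>H'. 3 * f h \<le> \<alpha>" "S \<subseteq> G' \<union> H'"
    using assms(2) unfolding light_cover_def by blast
  moreover have "card (G \<union> G') \<le> card G + card G'" "card (H \<union> H') \<le> card H + card H'"
    by (rule card_Un_le)+
  ultimately show ?thesis
    unfolding light_cover_def by (intro exI[of _ "G \<union> G'"] exI[of _ "H \<union> H'"]) auto
qed

(* The total number of units alone does not guarantee q groups of 4 units (three bundles of 3
   units form only one group). Counting 1s and 3s once and 4s twice gives a second quantity
   which, together with the total, survives splitting off one group (full_bin_counts). *)
definition half_units :: "nat \<Rightarrow> nat" where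
  "half_units u = (if u = 4 then 2 else if u = 1 \<or> u = 3 then 1 else 0)"

lemma sum_comp_by_fibres:
  fixes u :: "'a \<Rightarrow> nat" and g :: "nat \<Rightarrow> nat"
  assumes "finite K" "\<forall>k\<in>K. u k \<le> m"
  shows "(\<Sum>k\<in>K. g (u k)) = (\<Sum>j\<le>m. card {k\<in>K. u k = j} * g j)"
proof -
  have "(\<Sum>k\<in>K. g (u k)) = (\<Sum>j\<le>m. \<Sum>k\<in>{k\<in>K. u k = j}. g (u k))"
    using assms by (intro sum.group[symmetric]) auto
  also have "\<dots> = (\<Sum>j\<le>m. card {k\<in>K. u k = j} * g j)"
    by (intro sum.cong refl) simp
  finally show ?thesis .
qed

lemma sum_units_by_fibres:
  fixes u :: "'a \<Rightarrow> nat"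
  assumes "finite K" "\<forall>k\<in>K. u k \<le> 4"
  shows "(\<Sum>k\<in>K. u k) = card {k\<in>K. u k = 1} + 2 * card {k\<in>K. u k = 2}
           + 3 * card {k\<in>K. u k = 3} + 4 * card {k\<in>K. u k = 4}"
    and "(\<Sum>k\<in>K. half_units (u k)) = card {k\<in>K. u k = 1} + card {k\<in>K. u k = 3}
           + 2 * card {k\<in>K. u k = 4}"
  using sum_comp_by_fibres[OF assms, of id] sum_comp_by_fibres[OF assms, of half_units]
  by (simp_all add: numeral_eq_Suc half_units_def)

lemma obtain_subset_with_fibre_cards:
  assumes "\<forall>j. d j \<le> card {k\<in>K. u k = j}"
  obtains B where "B \<subseteq> K" "\<forall>j. card {k\<in>B. u k = j} = d j"
proof -
  have "\<forall>j. \<exists>B. B \<subseteq> {k\<in>K. u k = j} \<and> card B = d j"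
    using assms by (meson obtain_subset_with_card_n)
  then obtain B where B: "\<forall>j. B j \<subseteq> {k\<in>K. u k = j} \<and> card (B j) = d j"
    by metis
  then have "{k \<in> \<Union>(range B). u k = j} = B j" for j
    by blast
  with B show thesis
    by (intro that[of "\<Union>(range B)"]) auto
qed

lemma full_bin_counts:
  fixes c :: "nat \<Rightarrow> nat"
  assumes "4 * Suc q \<le> c 1 + 2 * c 2 + 3 * c 3 + 4 * c 4" "2 * Suc q \<le> c 1 + c 3 + 2 * c 4"
  obtains d where "\<forall>j. d j \<le> c j" "4 \<le> d 1 + 2 * d 2 + 3 * d 3 + 4 * d 4"
    "4 * q + (d 1 + 2 * d 2 + 3 * d 3 + 4 * d 4) \<le> c 1 + 2 * c 2 + 3 * c 3 + 4 * c 4"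
    "2 * q + (d 1 + d 3 + 2 * d 4) \<le> c 1 + c 3 + 2 * c 4"
proof -
  have "1 \<le> c 4 \<or> (1 \<le> c 3 \<and> 1 \<le> c 1) \<or> (2 \<le> c 3 \<and> c 1 = 0 \<and> c 4 = 0) \<or> 2 \<le> c 2
      \<or> (1 \<le> c 2 \<and> 2 \<le> c 1) \<or> (4 \<le> c 1 \<and> c 2 = 0 \<and> c 3 = 0 \<and> c 4 = 0)"
    using assms by presburger
  then consider "1 \<le> c 4" | "1 \<le> c 3" "1 \<le> c 1" | "2 \<le> c 3" "c 1 = 0" "c 4 = 0" | "2 \<le> c 2"
    | "1 \<le> c 2" "2 \<le> c 1" | "4 \<le> c 1" "c 2 = 0" "c 3 = 0" "c 4 = 0"
    by metis
  then show thesis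
  proof cases
    case 1
    then show ?thesis using assms by (intro that[of "(\<lambda>_. 0)(4 := 1)"]) auto
  next
    case 2
    then show ?thesis using assms by (intro that[of "(\<lambda>_. 0)(1 := 1, 3 := 1)"]) auto
  next
    case 3
    then show ?thesis using assms by (intro that[of "(\<lambda>_. 0)(3 := 2)"]) auto
  next
    case 4
    then show ?thesis using assms by (intro that[of "(\<lambda>_. 0)(2 := 2)"]) auto
  next
    case 5
    then show ?thesis using assms by (intro that[of "(\<lambda>_. 0)(1 := 2, 2 := 1)"]) auto
  next
    case 6
    then show ?thesis using assms by (intro that[of "(\<lambda>_. 0)(1 := 4)"]) auto
  qed
qed

lemma obtain_full_bin:
  fixes u :: "'a \<Rightarrow> nat"
  assumes "finite K" "\<forall>k\<in>K. u k \<le> 4"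
    and "4 * Suc q \<le> (\<Sum>k\<in>K. u k)" "2 * Suc q \<le> (\<Sum>k\<in>K. half_units (u k))"
  obtains B where "B \<subseteq> K" "4 \<le> (\<Sum>k\<in>B. u k)"
    "4 * q \<le> (\<Sum>k\<in>K - B. u k)" "2 * q \<le> (\<Sum>k\<in>K - B. half_units (u k))"
proof -
  define c where "c j = card {k\<in>K. u k = j}" for j
  obtain d where d: "\<forall>j. d j \<le> c j" "4 \<le> d 1 + 2 * d 2 + 3 * d 3 + 4 * d 4"
      "4 * q + (d 1 + 2 * d 2 + 3 * d 3 + 4 * d 4) \<le> c 1 + 2 * c 2 + 3 * c 3 + 4 * c 4"
      "2 * q + (d 1 + d 3 + 2 * d 4) \<le> c 1 + c 3 + 2 * c 4"
    using full_bin_counts[of q c] assms(3,4) unfolding sum_units_by_fibres[OF assms(1,2)] c_def by blast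
  obtain B where B: "B \<subseteq> K" "\<forall>j. card {k\<in>B. u k = j} = d j"
    using obtain_subset_with_fibre_cards[of d K u] d(1) unfolding c_def by blast
  have "finite B" "\<forall>k\<in>B. u k \<le> 4"
    using B(1) assms(1,2) finite_subset by auto
  note B_sums = sum_units_by_fibres[OF this, unfolded B(2)[rule_format]]
  show thesis
  proof (rule that[OF B(1)])
    show "4 \<le> (\<Sum>k\<in>B. u k)"
      using B_sums d(2) by simp
    show "4 * q \<le> (\<Sum>k\<in>K - B. u k)" "2 * q \<le> (\<Sum>k\<in>K - B. half_units (u k))"
      using d(3,4) B_sums \<open>finite B\<close> B(1)
      by (simp_all add: sum_diff_nat sum_units_by_fibres[OF assms(1,2)] c_def)
  qed
qed

lemma bin_covering_units:
  fixes u :: "'a \<Rightarrow> nat"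
  assumes "1 \<le> q" "finite K" "\<forall>k\<in>K. u k \<le> 4"
    and "4 * q \<le> (\<Sum>k\<in>K. u k)" "2 * q \<le> (\<Sum>k\<in>K. half_units (u k))"
  shows "\<exists>\<phi>. (\<forall>k\<in>K. \<phi> k < q) \<and> (\<forall>j<q. 4 \<le> (\<Sum>k\<in>{k\<in>K. \<phi> k = j}. u k))"
  using assms
proof (induction q arbitrary: K rule: nat_induct_at_least)
  case base
  then show ?case
    by (intro exI[of _ "\<lambda>_. 0"]) simp
next
  case (Suc q)
  obtain B where B: "B \<subseteq> K" "4 \<le> (\<Sum>k\<in>B. u k)"
      "4 * q \<le> (\<Sum>k\<in>K - B. u k)" "2 * q \<le> (\<Sum>k\<in>K - B. half_units (u k))"
    using obtain_full_bin[OF Suc.prems] by blast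
  obtain \<phi> where \<phi>: "\<forall>k\<in>K - B. \<phi> k < q"
      "\<forall>j<q. 4 \<le> (\<Sum>k\<in>{k\<in>K - B. \<phi> k = j}. u k)"
    using Suc.IH[of "K - B"] Suc.prems B(3,4) by auto
  let ?\<psi> = "\<lambda>k. if k \<in> B then q else \<phi> k"
  have "{k\<in>K. ?\<psi> k = q} = B"
    using B(1) \<phi>(1) by auto
  moreover have "{k\<in>K. ?\<psi> k = j} = {k\<in>K - B. \<phi> k = j}" if "j < q" for j
    using that by auto
  ultimately show ?case
    using B(2) \<phi> by (intro exI[of _ ?\<psi>]) (auto simp: less_Suc_eq)
qed

lemma sum_ge_from_units:
  fixes u :: "'a \<Rightarrow> nat" and \<rho> :: "'a \<Rightarrow> real"
  assumes "finite B" "\<forall>k\<in>B. 0 \<le> \<rho> k" "\<forall>k\<in>B. real (u k) * T / 4 \<le> \<rho> k"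
    and "4 \<le> (\<Sum>k\<in>B. u k)"
  shows "T \<le> (\<Sum>k\<in>B. \<rho> k)"
proof (cases "0 \<le> T")
  case True
  have "4 \<le> real (\<Sum>k\<in>B. u k)"
    using assms(4) by (metis of_nat_le_iff of_nat_numeral)
  then have "4 * T \<le> real (\<Sum>k\<in>B. u k) * T"
    using True by (rule mult_right_mono)
  then have "T \<le> real (\<Sum>k\<in>B. u k) * T / 4"
    by linarith
  also have "\<dots> = (\<Sum>k\<in>B. real (u k) * T / 4)"
    by (simp add: sum_distrib_right sum_divide_distrib)
  also have "\<dots> \<le> (\<Sum>k\<in>B. \<rho> k)"
    using assms(3) by (intro sum_mono) auto
  finally show ?thesis .
next
  case False
  then show ?thesis
    using assms(2) sum_nonneg[of B \<rho>] by auto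
qed

lemma group_bundles_by_units:
  fixes u :: "'a \<Rightarrow> nat" and \<rho> :: "'a \<Rightarrow> real"
  assumes "1 \<le> q" "finite K" "\<forall>k\<in>K. u k \<le> 4"
    and "\<forall>k\<in>K. 0 \<le> \<rho> k" "\<forall>k\<in>K. real (u k) * T / 4 \<le> \<rho> k"
    and "4 * q \<le> (\<Sum>k\<in>K. u k)" "2 * q \<le> (\<Sum>k\<in>K. half_units (u k))"
  obtains \<phi> where "\<forall>k\<in>K. \<phi> k < q"
      "\<forall>j<q. T \<le> (\<Sum>k\<in>{k\<in>K. \<phi> k = j}. \<rho> k)"
proof -
  obtain \<phi> where \<phi>: "\<forall>k\<in>K. \<phi> k < q"
      "\<forall>j<q. 4 \<le> (\<Sum>k\<in>{k\<in>K. \<phi> k = j}. u k)"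
    using bin_covering_units[OF assms(1,2,3,6,7)] by blast
  have "T \<le> (\<Sum>k\<in>{k\<in>K. \<phi> k = j}. \<rho> k)" if "j < q" for j
    using assms(2,4,5) \<phi>(2) that by (intro sum_ge_from_units[where u = u]) auto
  with \<phi>(1) show thesis
    using that by blast
qed

lemma MMS_ge_merged_partition:
  fixes w :: "'a \<Rightarrow> real" and A :: "'a \<Rightarrow> nat" and \<phi> :: "nat \<Rightarrow> nat"
  assumes "finite X" "1 \<le> q" "\<forall>x\<in>X. A x < n" "\<forall>k<n. \<phi> k < q"
    and "\<forall>j<q. T \<le> (\<Sum>k\<in>{k\<in>{..<n}. \<phi> k = j}. \<Sum>x\<in>{x\<in>X. A x = k}. w x)"
  shows "T \<le> MMS q w X"
proof (rule MMS_geI[OF assms(1,2)])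
  show "restrict (\<phi> \<circ> A) X \<in> X \<rightarrow>\<^sub>E {..<q}"
    using assms(3,4) by auto
  fix j assume "j < q"
  have "(\<Sum>k\<in>{k\<in>{..<n}. \<phi> k = j}. \<Sum>x\<in>{x\<in>X. A x = k}. w x)
      = (\<Sum>k\<in>{k\<in>{..<n}. \<phi> k = j}. \<Sum>x\<in>{x\<in>{x\<in>X. restrict (\<phi> \<circ> A) X x = j}. A x = k}. w x)"
    by (intro sum.cong refl) auto
  also have "\<dots> = (\<Sum>x\<in>{x\<in>X. restrict (\<phi> \<circ> A) X x = j}. w x)"
    using assms(1,3) by (intro sum.group) auto
  finally have "(\<Sum>k\<in>{k\<in>{..<n}. \<phi> k = j}. \<Sum>x\<in>{x\<in>X. A x = k}. w x)
      = (\<Sum>x\<in>{x\<in>X. restrict (\<phi> \<circ> A) X x = j}. w x)" .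
  moreover have "T \<le> (\<Sum>k\<in>{k\<in>{..<n}. \<phi> k = j}. \<Sum>x\<in>{x\<in>X. A x = k}. w x)"
    using assms(5) \<open>j < q\<close> by blast
  ultimately show "T \<le> (\<Sum>x\<in>{x\<in>X. restrict (\<phi> \<circ> A) X x = j}. w x)"
    by linarith
qed

lemma sum_card_fibres:
  assumes "finite S" "finite T" "A ` S \<subseteq> T"
  shows "(\<Sum>k\<in>T. card {x\<in>S. A x = k}) = card S"
  using sum.group[OF assms, of "\<lambda>_. 1::nat"] by simp

lemma sum_card_fibres_Int_le:
  fixes A :: "'a \<Rightarrow> nat"
  assumes "finite X" "\<forall>x\<in>X. A x < n" "finite S"
  shows "(\<Sum>k<n. card ({x\<in>X. A x = k} \<inter> S)) \<le> card S"
proof -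
  have "{x\<in>X. A x = k} \<inter> S = {x\<in>X \<inter> S. A x = k}" for k
    by auto
  then have "(\<Sum>k<n. card ({x\<in>X. A x = k} \<inter> S)) = card (X \<inter> S)"
    using assms(1,2) by (simp only:) (rule sum_card_fibres; auto)
  also have "\<dots> \<le> card S"
    using assms(3) by (rule card_mono) auto
  finally show ?thesis .
qed

lemma half_units_removal: "2 \<le> half_units (4 - (3 * a + b)) + a + b"
  unfolding half_units_def by presburger

lemma units_after_removal:
  fixes a b :: "nat \<Rightarrow> nat"
  assumes "(\<Sum>k<n. a k) \<le> r" "(\<Sum>k<n. b k) \<le> r"
  shows "4 * (n - r) \<le> (\<Sum>k<n. 4 - (3 * a k + b k))"
    and "2 * (n - r) \<le> (\<Sum>k<n. half_units (4 - (3 * a k + b k)))"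
proof -
  have "(\<Sum>k<n. 4::nat) \<le> (\<Sum>k<n. (4 - (3 * a k + b k)) + 3 * a k + b k)"
    by (intro sum_mono) auto
  then show "4 * (n - r) \<le> (\<Sum>k<n. 4 - (3 * a k + b k))"
    using assms by (simp add: sum.distrib sum_distrib_left[symmetric])
  have "(\<Sum>k<n. 2::nat) \<le> (\<Sum>k<n. half_units (4 - (3 * a k + b k)) + a k + b k)"
    using half_units_removal by (intro sum_mono) auto
  then show "2 * (n - r) \<le> (\<Sum>k<n. half_units (4 - (3 * a k + b k)))"
    using assms by (simp add: sum.distrib)
qed

lemma remaining_value_ge_units:
  fixes a b :: nat and \<epsilon> \<rho> :: real
  assumes "0 \<le> \<epsilon>" "0 \<le> \<rho>" "1 - a * (3/4 + \<epsilon>) - b * ((3/4 + \<epsilon>) / 3) \<le> \<rho>"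
  shows "real (4 - (3 * a + b)) * (1 - 4 * \<epsilon>) / 4 \<le> \<rho>"
proof (cases "3 * a + b \<le> 3")
  case True
  then have "(a = 0 \<and> b \<le> 3) \<or> (a = 1 \<and> b = 0)"
    by auto
  then have "(a = 0 \<and> (b = 0 \<or> b = 1 \<or> b = 2 \<or> b = 3)) \<or> (a = 1 \<and> b = 0)"
    by auto
  then show ?thesis
    using assms by (elim disjE conjE) (simp_all add: field_simps)
qed (use assms in simp)

lemma bundle_value_after_removal:
  fixes w :: "'a \<Rightarrow> real"
  assumes "finite P" "\<forall>x\<in>P. 0 \<le> w x" "1 \<le> (\<Sum>x\<in>P. w x)" "0 \<le> \<epsilon>"
    and "\<forall>g\<in>G. w g \<le> 3/4 + \<epsilon>" "\<forall>h\<in>H. 3 * w h \<le> 3/4 + \<epsilon>" "R \<subseteq> G \<union> H"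
  shows "real (4 - (3 * card (P \<inter> G) + card (P \<inter> H))) * (1 - 4 * \<epsilon>) / 4 \<le> (\<Sum>x\<in>P - R. w x)"
proof (rule remaining_value_ge_units[OF assms(4)])
  show "0 \<le> (\<Sum>x\<in>P - R. w x)"
    using assms(2) by (intro sum_nonneg) auto
  have "(\<Sum>x\<in>P \<inter> R. w x) \<le> (\<Sum>x\<in>(P \<inter> G) \<union> (P \<inter> H). w x)"
    using assms(1,2,7) by (intro sum_mono2) auto
  also have "\<dots> = (\<Sum>x\<in>P \<inter> G. w x) + (\<Sum>x\<in>P \<inter> H. w x) - (\<Sum>x\<in>P \<inter> G \<inter> H. w x)"
    using assms(1) by (subst sum_Un) (auto simp: Int_ac)
  also have "\<dots> \<le> (\<Sum>x\<in>P \<inter> G. w x) + (\<Sum>x\<in>P \<inter> H. w x)"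
    using assms(2) sum_nonneg[of "P \<inter> G \<inter> H" w] by auto
  also have "\<dots> \<le> card (P \<inter> G) * (3/4 + \<epsilon>) + card (P \<inter> H) * ((3/4 + \<epsilon>) / 3)"
    using assms(5,6) by (intro add_mono sum_bounded_above) auto
  finally have "(\<Sum>x\<in>P \<inter> R. w x)
      \<le> card (P \<inter> G) * (3/4 + \<epsilon>) + card (P \<inter> H) * ((3/4 + \<epsilon>) / 3)" .
  moreover have "(\<Sum>x\<in>P. w x) = (\<Sum>x\<in>P \<inter> R. w x) + (\<Sum>x\<in>P - R. w x)"
    using assms(1) by (rule sum.Int_Diff)
  ultimately show "1 - card (P \<inter> G) * (3/4 + \<epsilon>) - card (P \<inter> H) * ((3/4 + \<epsilon>) / 3)
      \<le> (\<Sum>x\<in>P - R. w x)"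
    using assms(3) by linarith
qed

lemma MMS_after_removing_light_cover:
  fixes w :: "'a \<Rightarrow> real"
  assumes "finite X" "\<forall>x\<in>X. 0 \<le> w x" "1 \<le> MMS n w X" "0 \<le> \<epsilon>" "r < n"
    and "light_cover w (3/4 + \<epsilon>) r R"
  shows "1 - 4 * \<epsilon> \<le> MMS (n - r) w (X - R)"
proof -
  obtain A where A: "A \<in> X \<rightarrow>\<^sub>E {..<n}"
      "\<And>k. k < n \<Longrightarrow> MMS n w X \<le> (\<Sum>x\<in>{x\<in>X. A x = k}. w x)"
    using obtain_MMS_partition[OF assms(1), of n w] assms(5) by auto
  then have A_lt: "\<forall>x\<in>X. A x < n"
    by auto
  obtain G H where GH: "finite G" "finite H" "card G \<le> r" "card H \<le> r"
      "\<forall>g\<in>G. w g \<le> 3/4 + \<epsilon>" "\<forall>h\<in>H. 3 * w h \<le> 3/4 + \<epsilon>" "R \<subseteq> G \<union> H"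
    using assms(6) unfolding light_cover_def by blast
  define u where "u k = 4 - (3 * card ({x\<in>X. A x = k} \<inter> G) + card ({x\<in>X. A x = k} \<inter> H))" for k
  define \<rho> where "\<rho> k = (\<Sum>x\<in>{x\<in>X. A x = k} - R. w x)" for k
  have "(\<Sum>k<n. card ({x\<in>X. A x = k} \<inter> G)) \<le> r" "(\<Sum>k<n. card ({x\<in>X. A x = k} \<inter> H)) \<le> r"
    using sum_card_fibres_Int_le[OF assms(1) A_lt] GH(1-4) by (meson order_trans)+
  note units = units_after_removal[OF this, folded u_def]
  have value_bound: "\<forall>k\<in>{..<n}. real (u k) * (1 - 4 * \<epsilon>) / 4 \<le> \<rho> k"
  proof
    fix k assume "k \<in> {..<n}"
    then have "1 \<le> (\<Sum>x\<in>{x\<in>X. A x = k}. w x)"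
      using A(2) assms(3) by fastforce
    then show "real (u k) * (1 - 4 * \<epsilon>) / 4 \<le> \<rho> k"
      using assms(1,2,4) GH(5-7) unfolding u_def \<rho>_def by (intro bundle_value_after_removal) auto
  qed
  have value_nonneg: "\<forall>k\<in>{..<n}. 0 \<le> \<rho> k"
    using assms(2) unfolding \<rho>_def by (auto intro: sum_nonneg)
  have "1 \<le> n - r" "\<forall>k\<in>{..<n}. u k \<le> 4"
    using assms(5) by (auto simp: u_def)
  then obtain \<phi> where \<phi>: "\<forall>k\<in>{..<n}. \<phi> k < n - r"
      "\<forall>j<n - r. 1 - 4 * \<epsilon> \<le> (\<Sum>k\<in>{k\<in>{..<n}. \<phi> k = j}. \<rho> k)"
    using group_bundles_by_units[OF _ finite_lessThan _ value_nonneg value_bound units] by blast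
  have "{x\<in>X - R. A x = k} = {x\<in>X. A x = k} - R" for k
    by auto
  with \<phi> show ?thesis
    using assms(1,5) A_lt unfolding \<rho>_def by (intro MMS_ge_merged_partition[where A = A and n = n]) auto
qed

section \<open>Runs of the reduction\<close>

lemma goods_at_empty [simp]: "goods_at L {} = {}"
  unfolding goods_at_def by simp

lemma goods_at_insert [simp]:
  "goods_at L (insert p P) = (if 1 \<le> p \<and> p \<le> length L then {L ! (p - 1)} else {}) \<union> goods_at L P"
  unfolding goods_at_def by auto

lemma light_cover_rule4_goods:
  fixes f :: "nat \<Rightarrow> real"
  assumes L: "distinct L" "sorted_wrt (\<lambda>x y. f y \<le> f x) L" and "1 \<le> c"
    and first: "(\<Sum>g\<in>goods_at L {1}. f g) < \<alpha>"
    and triple: "(\<Sum>g\<in>goods_at L {2*c - 1, 2*c, 2*c + 1}. f g) < \<alpha>"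
  shows "light_cover f \<alpha> 1 (goods_at L {1, 2*c + 1})"
proof -
  have big: "f g \<le> \<alpha>" if "g \<in> goods_at L {1}" for g
  proof -
    have "goods_at L {1} = {g}"
      using that by (simp split: if_splits)
    then show ?thesis
      using first by simp
  qed
  have small: "3 * f h \<le> \<alpha>" if "h \<in> goods_at L {2*c + 1}" for h
  proof -
    have len: "2*c + 1 \<le> length L" and h: "h = L ! (2*c)"
      using that by (simp_all split: if_splits)
    let ?x = "L ! (2*c - 2)" and ?y = "L ! (2*c - 1)"
    have "goods_at L {2*c - 1, 2*c, 2*c + 1} = {?x, ?y, h}"
      using len \<open>1 \<le> c\<close> h by (auto simp: numeral_2_eq_2)
    moreover have "?x \<noteq> ?y" "?x \<noteq> h" "?y \<noteq> h"
      using len \<open>1 \<le> c\<close> h L(1) by (simp_all add: nth_eq_iff_index_eq)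
    ultimately have "f ?x + f ?y + f h < \<alpha>"
      using triple by simp
    moreover have "f h \<le> f ?x" "f h \<le> f ?y"
      using len \<open>1 \<le> c\<close> h by (simp_all add: sorted_wrt_nth_less[OF L(2)])
    ultimately show ?thesis
      by linarith
  qed
  have "card (goods_at L {p}) \<le> 1" for p
    by simp
  moreover have "goods_at L {1, 2*c + 1} = goods_at L {1} \<union> goods_at L {2*c + 1}"
    by simp
  ultimately show ?thesis
    unfolding light_cover_def using big small
    by (intro exI[of _ "goods_at L {1}"] exI[of _ "goods_at L {2*c + 1}"]) simp
qed

definition rule4_count :: "(nat \<times> nat \<times> nat set) list \<Rightarrow> nat" where
  "rule4_count tr = length (filter (\<lambda>s. fst s = 4) tr)"

definition rule4_goods :: "(nat \<times> nat \<times> nat set) list \<Rightarrow> nat set" where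
  "rule4_goods tr = (\<Union>(k, a, S)\<in>set tr. if k = 4 then S else {})"

lemma rule4_count_Cons [simp]:
  "rule4_count ((k, a, S) # tr) = (if k = 4 then 1 else 0) + rule4_count tr"
  by (simp add: rule4_count_def)

lemma rule4_goods_Cons [simp]:
  "rule4_goods ((k, a, S) # tr) = (if k = 4 then S else {}) \<union> rule4_goods tr"
  by (simp add: rule4_goods_def)

lemma reduce_run_agents_subset: "reduce_run w \<alpha> N L tr N' L' \<Longrightarrow> N' \<subseteq> N"
  by (induction rule: reduce_run.induct) auto

lemma reduce_run_card_agents:
  "reduce_run w \<alpha> N L tr N' L' \<Longrightarrow> finite N \<Longrightarrow> card N = card N' + length tr"
proof (induction rule: reduce_run.induct)
  case (step w \<alpha> N L k i S tr N' L')
  then have "0 < card N"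
    by (auto simp: rule_applicable_def card_gt_0_iff)
  with step show ?case
    by (simp add: rule_applicable_def card_Diff_singleton)
qed simp

lemma reduce_run_light_cover:
  assumes "reduce_run w \<alpha> N L tr N' L'" "finite N" "i \<in> N'"
    and "distinct L" "sorted_wrt (\<lambda>x y. w i y \<le> w i x) L"
  shows "light_cover (w i) \<alpha> (rule4_count tr) (rule4_goods tr)"
  using assms
proof (induction rule: reduce_run.induct)
  case (stop w \<alpha> N L)
  then show ?case
    by (simp add: rule4_count_def rule4_goods_def light_cover_empty)
next
  case (step w \<alpha> N L k i' S tr N' L')
  have IH: "light_cover (w i) \<alpha> (rule4_count tr) (rule4_goods tr)"
  proof (rule step.IH)
    show "sorted_wrt (\<lambda>x y. w i y \<le> w i x) (filter (\<lambda>g. g \<notin> S) L)"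
      using step.prems(4) by (rule sorted_wrt_filter)
  qed (use step.prems in auto)
  show ?case
  proof (cases "k = 4")
    case True
    have "i \<in> N"
      using reduce_run_agents_subset[OF step.hyps(4)] step.prems(2) by blast
    then have "1 \<le> card N"
      using step.prems(1) by (auto simp: Suc_le_eq card_gt_0_iff)
    moreover have "\<not> rule_applicable w \<alpha> N L 1 i" "\<not> rule_applicable w \<alpha> N L 2 i"
      using step.hyps(2) True by auto
    moreover have "S = goods_at L {1, 2 * card N + 1}"
      using step.hyps(3) True by (simp add: rule_pos_def)
    ultimately have "light_cover (w i) \<alpha> 1 S"
      using step.prems \<open>i \<in> N\<close>
      by (simp only:) (rule light_cover_rule4_goods; simp add: rule_applicable_def rule_pos_def not_le)
    with IH True show ?thesis
      using light_cover_Un[OF \<open>light_cover (w i) \<alpha> 1 S\<close> IH] by simp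
  next
    case False
    with IH show ?thesis
      by simp
  qed
qed

lemma reduce_run_rule4_count_less:
  assumes "reduce_run w \<alpha> N L tr N' L'" "finite N" "i \<in> N'"
  shows "rule4_count tr < card N"
proof -
  have "0 < card N'"
    using assms reduce_run_agents_subset[OF assms(1)] by (auto simp: card_gt_0_iff dest: finite_subset)
  moreover have "rule4_count tr \<le> length tr"
    unfolding rule4_count_def by (rule length_filter_le)
  ultimately show ?thesis
    using reduce_run_card_agents[OF assms(1,2)] by linarith
qed

theorem lemma18:
  fixes n :: nat and M :: "'g set" and v :: "nat \<Rightarrow> 'g \<Rightarrow> real" and \<epsilon> :: real
    and tr :: "(nat \<times> nat \<times> nat set) list" and N' :: "nat set" and L' :: "nat list"
  assumes "finite M"
    and "\<forall>i\<in>{1..n}. \<forall>g\<in>M. v i g \<ge> 0"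
    and "\<forall>i\<in>{1..n}. MMS n (v i) M > 0"
    and "\<epsilon> \<ge> 0"
    and "reduce_run (normalize_val n (card M) (order_val M v)) (3/4 + \<epsilon>)
           {1..n} [1..<card M + 1] tr N' L'"
  shows "\<forall>i\<in>N'.
           MMS (n - length (filter (\<lambda>s. fst s = 4) tr))
               (normalize_val n (card M) (order_val M v) i)
               ({1..card M} - (\<Union>(k, a, S)\<in>set tr. if k = 4 then S else {}))
           \<ge> 1 - 4 * \<epsilon>"
proof
  fix i assume "i \<in> N'"
  let ?W = "normalize_val n (card M) (order_val M v)"
  have "i \<in> {1..n}"
    using reduce_run_agents_subset[OF assms(5)] \<open>i \<in> N'\<close> by blast
  then have i: "1 \<le> n" "0 < MMS n (v i) M" "\<forall>g\<in>M. 0 \<le> v i g"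
    using assms(2,3) by auto
  have "1 \<le> MMS n (?W i) {1..card M}"
    using MMS_normalize_order_val[where v = v and i = i, OF assms(1) i(1,2)] by simp
  moreover have "light_cover (?W i) (3/4 + \<epsilon>) (rule4_count tr) (rule4_goods tr)"
    using reduce_run_light_cover[OF assms(5) _ \<open>i \<in> N'\<close> _
        sorted_normalize_order_val[where v = v and i = i, OF assms(1) i(1,2)]]
    by simp
  moreover have "rule4_count tr < n"
    using reduce_run_rule4_count_less[OF assms(5) _ \<open>i \<in> N'\<close>] by simp
  ultimately have "1 - 4 * \<epsilon> \<le> MMS (n - rule4_count tr) (?W i) ({1..card M} - rule4_goods tr)"
    using normalize_order_val_nonneg[where v = v and i = i, OF assms(1) i] assms(4)
    by (intro MMS_after_removing_light_cover) auto
  then show "MMS (n - length (filter (\<lambda>s. fst s = 4) tr)) (?W i)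
      ({1..card M} - (\<Union>(k, a, S)\<in>set tr. if k = 4 then S else {})) \<ge> 1 - 4 * \<epsilon>"
    unfolding rule4_count_def rule4_goods_def .
qed

end
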